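(* Let $(x_i)_{i\in\mathbf Z}$ be an admissible frontier which is ultimately periodic, and let $t$ be the $SL_2$-tiling with values in $\mathbf N$ extending its embedding (as in Theorem 3). Then for every point $Q\in\mathbf Z^2$ and every nonzero vector $v=(a,b)\in\mathbf Z^2$ with $ab\le0$, the ray $(t(Q+nv))_{n\in\mathbf N}$ is $\mathbf N$-rational.
   Context: Cartesian coordinates on $\mathbf Z^2$ (first coordinate to the right, second upward). An $SL_2$-tiling is $t:\mathbf Z^2\to\mathbf N$ with $t(a,b+1)t(a+1,b)-t(a,b)t(a+1,b+1)=1$ for all $(a,b)$. A frontier is a bi-infinite word over $\{x,y\}$, admissible if neither $(x_n)_{n\ge0}$ nor $(x_n)_{n\le0}$ is ultimately constant; it is embedded as lattice points $P_i$ with $P_i-P_{i-1}=(1,0)$ if $x_i=x$, $(0,1)$ if $x_i=y$, and the tiling extends it if $t(P_i)=1$ for all $i$ (such a tiling exists and is unique). The frontier is ultimately periodic if there are $p\ge1$ and $n_0,n_0'\in\mathbf Z$ with $x_n=x_{n+p}$ for $n\ge n_0$ and $x_n=x_{n-p}$ for $n\le n_0'$. A sequence $(a_n)$ over $\mathbf N$ is $\mathbf N$-rational if $a_n=\lambda M^n\gamma$ for all $n$, for some $\lambda\in\mathbf N^{1\times r}$, $M\in\mathbf N^{r\times r}$, $\gamma\in\mathbf N^{r\times1}$. *)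

theory Defs
  imports "Jordan_Normal_Form.Matrix"
begin

datatype letter = X | Y

text \<open>SL2-tiling with values in the positive integers (points of Z^2 as int pairs,
first coordinate to the right, second upward).\<close>
definition SL2_tiling :: "(int \<times> int \<Rightarrow> nat) \<Rightarrow> bool" where
  "SL2_tiling t \<longleftrightarrow> (\<forall>p. 0 < t p) \<and>
     (\<forall>a b. int (t (a, b+1)) * int (t (a+1, b)) - int (t (a, b)) * int (t (a+1, b+1)) = 1)"

definition admissible_frontier :: "(int \<Rightarrow> letter) \<Rightarrow> bool" where
  "admissible_frontier x \<longleftrightarrow>
     \<not> (\<exists>N c. \<forall>n\<ge>N. n \<ge> 0 \<longrightarrow> x n = c) \<and>
     \<not> (\<exists>N c. \<forall>n\<le>N. n \<le> 0 \<longrightarrow> x n = c)"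

definition ultimately_periodic_frontier :: "(int \<Rightarrow> letter) \<Rightarrow> bool" where
  "ultimately_periodic_frontier x \<longleftrightarrow>
     (\<exists>p::int. p \<ge> 1 \<and> (\<exists>n0 n0'. (\<forall>n\<ge>n0. x n = x (n + p)) \<and> (\<forall>n\<le>n0'. x n = x (n - p))))"

definition frontier_embedding :: "(int \<Rightarrow> letter) \<Rightarrow> (int \<Rightarrow> int \<times> int) \<Rightarrow> bool" where
  "frontier_embedding x P \<longleftrightarrow>
     (\<forall>i. P i = (if x i = X then (fst (P (i-1)) + 1, snd (P (i-1)))
                             else (fst (P (i-1)), snd (P (i-1)) + 1)))"

definition extends_frontier :: "(int \<times> int \<Rightarrow> nat) \<Rightarrow> (int \<Rightarrow> int \<times> int) \<Rightarrow> bool" where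
  "extends_frontier t P \<longleftrightarrow> (\<forall>i. t (P i) = 1)"

definition N_rational :: "(nat \<Rightarrow> nat) \<Rightarrow> bool" where
  "N_rational a \<longleftrightarrow> (\<exists>r (lam :: nat mat) (M :: nat mat) (gam :: nat mat).
     lam \<in> carrier_mat 1 r \<and> M \<in> carrier_mat r r \<and> gam \<in> carrier_mat r 1 \<and>
     (\<forall>n. a n = (lam * (M ^\<^sub>m n) * gam) $$ (0, 0)))"

end

theory Submission
  imports Defs
begin

text \<open>
  Let P r lie on the row and P c on the column of a lattice point, with r \<le> c,
  i.e. the point lies on the south-east side of the frontier.  Then the tiling value at that point
  is the upper-left entry of the product of the matrices [1 0; 1 1] (letter x) and [1 1; 0 1]
  (letter y) read along the frontier from position r + 1 to position c (\<open>tiling_formula\<close>);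
  this follows by induction on c - r from the SL2 relation and the fact that these products have
  determinant one.  Along a south-east ray, on each residue class n = L m + s for a suitable
  period L, the relevant frontier positions move left by whole periods of the left periodic part
  and right by whole periods of the right periodic part, so the values have the form
  (A^m B C^m)_{11} for fixed N-matrices A, B, C, which is N-rational.  Interleaving the residue
  classes and prepending finitely many terms gives the whole ray.  North-west rays reduce to
  south-east rays by exchanging the two coordinates together with the letters x and y.
\<close>

section \<open>N-rational sequences\<close>

fun mpow :: "'a set \<Rightarrow> ('a \<Rightarrow> 'a \<Rightarrow> nat) \<Rightarrow> nat \<Rightarrow> 'a \<Rightarrow> 'a \<Rightarrow> nat" where
  "mpow S M 0 i j = of_bool (i = j)"
| "mpow S M (Suc n) i j = (\<Sum>k\<in>S. mpow S M n i k * M k j)"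

text \<open>Working
  with arbitrary index sets makes the closure constructions (disjoint sums, products, extra
  states) direct; \<open>N_rational_iff_linrep\<close> and \<open>linrep_N_rational\<close> connect it with \<open>N_rational\<close>.\<close>

definition linrep :: "'a set \<Rightarrow> ('a \<Rightarrow> nat) \<Rightarrow> ('a \<Rightarrow> 'a \<Rightarrow> nat) \<Rightarrow> ('a \<Rightarrow> nat) \<Rightarrow> nat \<Rightarrow> nat" where
  "linrep S l M g n = (\<Sum>i\<in>S. \<Sum>j\<in>S. l i * mpow S M n i j * g j)"

lemma mpow_cong:
  assumes "\<And>i j. i \<in> S \<Longrightarrow> j \<in> S \<Longrightarrow> M i j = M' i j" "j \<in> S"
  shows "mpow S M n i j = mpow S M' n i j"
  using assms(2)
proof (induction n arbitrary: j)
  case (Suc n)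
  then show ?case using assms(1) by (auto intro!: sum.cong)
qed simp

lemma linrep_cong:
  assumes "\<And>i. i \<in> S \<Longrightarrow> l i = l' i" "\<And>i j. i \<in> S \<Longrightarrow> j \<in> S \<Longrightarrow> M i j = M' i j"
    "\<And>j. j \<in> S \<Longrightarrow> g j = g' j"
  shows "linrep S l M g = linrep S l' M' g'"
proof
  fix n
  have "mpow S M n i j = mpow S M' n i j" if "j \<in> S" for i j
    using mpow_cong[of S M M', OF assms(2) that] by blast
  then show "linrep S l M g n = linrep S l' M' g' n"
    unfolding linrep_def using assms(1,3) by (intro sum.cong) auto
qed

lemma pow_mat_entry:
  assumes "MM \<in> carrier_mat r r" "i < r" "j < r"
  shows "(MM ^\<^sub>m n) $$ (i, j) = mpow {..<r} (\<lambda>i j. MM $$ (i, j)) n i j"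
  using assms(3)
proof (induction n arbitrary: j)
  case 0
  then show ?case using assms(1,2) by (simp add: carrier_matD)
next
  case (Suc n)
  have "(MM ^\<^sub>m Suc n) $$ (i, j) = (\<Sum>k<r. (MM ^\<^sub>m n) $$ (i, k) * MM $$ (k, j))"
    using assms Suc.prems by (simp add: scalar_prod_def lessThan_atLeast0)
  also have "\<dots> = (\<Sum>k<r. mpow {..<r} (\<lambda>i j. MM $$ (i, j)) n i k * MM $$ (k, j))"
    using Suc.IH by (intro sum.cong) auto
  finally show ?case by simp
qed

lemma matrix_sequence_linrep:
  assumes "lam \<in> carrier_mat 1 r" "MM \<in> carrier_mat r r" "gam \<in> carrier_mat r 1"
  shows "(lam * (MM ^\<^sub>m n) * gam) $$ (0, 0)
           = linrep {..<r} (\<lambda>j. lam $$ (0, j)) (\<lambda>i j. MM $$ (i, j)) (\<lambda>i. gam $$ (i, 0)) n"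
proof -
  have row: "(lam * (MM ^\<^sub>m n)) $$ (0, k)
      = (\<Sum>i<r. lam $$ (0, i) * mpow {..<r} (\<lambda>i j. MM $$ (i, j)) n i k)" if "k < r" for k
    using assms that by (auto simp: scalar_prod_def pow_mat_entry lessThan_atLeast0 intro!: sum.cong)
  have "(lam * (MM ^\<^sub>m n) * gam) $$ (0, 0) = (\<Sum>k<r. (lam * (MM ^\<^sub>m n)) $$ (0, k) * gam $$ (k, 0))"
    using assms by (auto simp: scalar_prod_def lessThan_atLeast0 intro!: sum.cong)
  also have "\<dots> = (\<Sum>k<r. (\<Sum>i<r. lam $$ (0, i) * mpow {..<r} (\<lambda>i j. MM $$ (i, j)) n i k) * gam $$ (k, 0))"
    using row by (intro sum.cong) auto
  also have "\<dots> = linrep {..<r} (\<lambda>j. lam $$ (0, j)) (\<lambda>i j. MM $$ (i, j)) (\<lambda>i. gam $$ (i, 0)) n"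
    unfolding linrep_def sum_distrib_right by (subst sum.swap) simp
  finally show ?thesis .
qed

lemma N_rational_iff_linrep: "N_rational a \<longleftrightarrow> (\<exists>(r::nat) l M g. a = linrep {..<r} l M g)"
proof
  assume "N_rational a"
  then obtain r lam MM gam where carrier: "lam \<in> carrier_mat 1 r" "MM \<in> carrier_mat r r" "gam \<in> carrier_mat r 1"
    and a: "\<And>n. a n = (lam * (MM ^\<^sub>m n) * gam) $$ (0, 0)"
    unfolding N_rational_def by blast
  have "a = linrep {..<r} (\<lambda>j. lam $$ (0, j)) (\<lambda>i j. MM $$ (i, j)) (\<lambda>i. gam $$ (i, 0))"
    using a matrix_sequence_linrep[OF carrier] by auto
  then show "\<exists>(r::nat) l M g. a = linrep {..<r} l M g" by blast
next
  assume "\<exists>(r::nat) l M g. a = linrep {..<r} l M g"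
  then obtain r :: nat and l M g where a: "a = linrep {..<r} l M g" by blast
  define lam :: "nat mat" where "lam = mat 1 r (\<lambda>(_, j). l j)"
  define MM :: "nat mat" where "MM = mat r r (\<lambda>(i, j). M i j)"
  define gam :: "nat mat" where "gam = mat r 1 (\<lambda>(i, _). g i)"
  have carrier: "lam \<in> carrier_mat 1 r" "MM \<in> carrier_mat r r" "gam \<in> carrier_mat r 1"
    by (auto simp: lam_def MM_def gam_def)
  have "a n = (lam * (MM ^\<^sub>m n) * gam) $$ (0, 0)" for n
    unfolding matrix_sequence_linrep[OF carrier] a
    by (intro fun_cong[OF linrep_cong]) (simp_all add: lam_def MM_def gam_def)
  with carrier show "N_rational a" unfolding N_rational_def by blast
qed

lemma mpow_reindex:
  assumes "bij_betw f T S" "i \<in> T" "j \<in> T"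
  shows "mpow S M n (f i) (f j) = mpow T (\<lambda>i j. M (f i) (f j)) n i j"
  using assms(3)
proof (induction n arbitrary: j)
  case 0
  then show ?case using assms(1,2) by (auto simp: bij_betw_def inj_on_def)
next
  case (Suc n)
  have "mpow S M (Suc n) (f i) (f j) = (\<Sum>k\<in>T. mpow S M n (f i) (f k) * M (f k) (f j))"
    by (simp add: sum.reindex_bij_betw[OF assms(1), symmetric])
  also have "\<dots> = (\<Sum>k\<in>T. mpow T (\<lambda>i j. M (f i) (f j)) n i k * M (f k) (f j))"
    using Suc by (intro sum.cong) auto
  finally show ?case by simp
qed

lemma linrep_N_rational:
  assumes "finite S"
  shows "N_rational (linrep S l M g)"
proof -
  obtain f where f: "bij_betw f {..<card S} S"
    using ex_bij_betw_nat_finite[OF assms] by (auto simp: lessThan_atLeast0)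
  have "linrep S l M g n = linrep {..<card S} (l \<circ> f) (\<lambda>i j. M (f i) (f j)) (g \<circ> f) n" for n
    unfolding linrep_def by (simp add: sum.reindex_bij_betw[OF f, symmetric] mpow_reindex[OF f])
  then show ?thesis unfolding N_rational_iff_linrep by blast
qed

lemma linrep_support:
  assumes "finite S" "S0 \<subseteq> S" "S1 \<subseteq> S" "\<And>i. i \<in> S - S0 \<Longrightarrow> l i = 0" "\<And>j. j \<in> S - S1 \<Longrightarrow> g j = 0"
  shows "linrep S l M g n = (\<Sum>i\<in>S0. \<Sum>j\<in>S1. l i * mpow S M n i j * g j)"
proof -
  have "linrep S l M g n = (\<Sum>i\<in>S0. \<Sum>j\<in>S. l i * mpow S M n i j * g j)"
    unfolding linrep_def using assms(1,2,4) by (intro sum.mono_neutral_right) auto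
  also have "\<dots> = (\<Sum>i\<in>S0. \<Sum>j\<in>S1. l i * mpow S M n i j * g j)"
    using assms(1,3,5) by (intro sum.cong refl sum.mono_neutral_right) auto
  finally show ?thesis .
qed

lemma mpow_N_rational:
  assumes "finite S" "i \<in> S" "j \<in> S"
  shows "N_rational (\<lambda>n. mpow S M n i j)"
proof -
  have "mpow S M n i j = linrep S (\<lambda>k. of_bool (k = i)) M (\<lambda>k. of_bool (k = j)) n" for n
    using assms by (subst linrep_support[of S "{i}" "{j}"]) auto
  then show ?thesis using linrep_N_rational[OF assms(1)] by presburger
qed

lemma const_N_rational: "N_rational (\<lambda>n. c)"
proof -
  have "mpow {()} (\<lambda>_ _. 1) n () () = 1" for n by (induction n) simp_all
  then have "(\<lambda>n. c) = linrep {()} (\<lambda>_. 1) (\<lambda>_ _. 1) (\<lambda>_. c)" by (simp add: linrep_def fun_eq_iff)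
  then show ?thesis using linrep_N_rational[of "{()}"] by simp
qed

text \<open>Sums: run the two representations side by side on the disjoint union of their states.\<close>

lemma add_N_rational:
  assumes "N_rational a" "N_rational b"
  shows "N_rational (\<lambda>n. a n + b n)"
proof -
  obtain r1 :: nat and l1 M1 g1 where a: "a = linrep {..<r1} l1 M1 g1"
    using assms(1) unfolding N_rational_iff_linrep by blast
  obtain r2 :: nat and l2 M2 g2 where b: "b = linrep {..<r2} l2 M2 g2"
    using assms(2) unfolding N_rational_iff_linrep by blast
  define S where "S = Inl ` {..<r1} \<union> Inr ` {..<r2}"
  define M where "M = (\<lambda>i j. case (i, j) of (Inl i, Inl j) \<Rightarrow> M1 i j | (Inr i, Inr j) \<Rightarrow> M2 i j | _ \<Rightarrow> 0)"
  have sum_S: "(\<Sum>k\<in>S. f k) = (\<Sum>k<r1. f (Inl k)) + (\<Sum>k<r2. f (Inr k))" for f :: "nat + nat \<Rightarrow> nat"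
    unfolding S_def by (subst sum.union_disjoint) (auto simp: sum.reindex)
  have "(mpow S M n (Inl i) (Inl j) = mpow {..<r1} M1 n i j \<and> mpow S M n (Inl i) (Inr j') = 0) \<and>
        (mpow S M n (Inr i') (Inr j') = mpow {..<r2} M2 n i' j' \<and> mpow S M n (Inr i') (Inl j) = 0)"
    for n i j i' j'
    by (induction n arbitrary: j j') (simp_all add: sum_S M_def)
  then have "a n + b n = linrep S (case_sum l1 l2) M (case_sum g1 g2) n" for n
    unfolding linrep_def a b by (simp add: sum_S)
  then show ?thesis using linrep_N_rational[of S] by (simp add: S_def)
qed

lemma sum_N_rational:
  assumes "\<And>s. s \<in> A \<Longrightarrow> N_rational (f s)"
  shows "N_rational (\<lambda>n. \<Sum>s\<in>A. f s n)"
  using assms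
proof (induction A rule: infinite_finite_induct)
  case (infinite A)
  then show ?case using const_N_rational by simp
next
  case empty
  then show ?case using const_N_rational by simp
next
  case (insert s A)
  then show ?case using add_N_rational[of "f s"] by simp
qed

text \<open>Products: the Kronecker product of the representations.\<close>

lemma mpow_product:
  "mpow (S \<times> T) (\<lambda>(i, k) (j, m). M i j * N k m) n (i, k) (j, m) = mpow S M n i j * mpow T N n k m"
proof (induction n arbitrary: j m)
  case 0
  then show ?case by auto
next
  case (Suc n)
  have "mpow (S \<times> T) (\<lambda>(i, k) (j, m). M i j * N k m) (Suc n) (i, k) (j, m)
      = (\<Sum>u\<in>S. \<Sum>v\<in>T. (mpow S M n i u * M u j) * (mpow T N n k v * N v m))"
    by (simp add: Suc sum.cartesian_product' mult_ac)
  also have "\<dots> = mpow S M (Suc n) i j * mpow T N (Suc n) k m"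
    by (simp add: sum_product)
  finally show ?case .
qed

lemma linrep_mult:
  "linrep S l M g n * linrep T l' N g' n =
   linrep (S \<times> T) (\<lambda>(i, k). l i * l' k) (\<lambda>(i, k) (j, m). M i j * N k m) (\<lambda>(j, m). g j * g' m) n"
proof -
  let ?F = "\<lambda>i j k m. (l i * mpow S M n i j * g j) * (l' k * mpow T N n k m * g' m)"
  have "linrep (S \<times> T) (\<lambda>(i, k). l i * l' k) (\<lambda>(i, k) (j, m). M i j * N k m) (\<lambda>(j, m). g j * g' m) n
      = (\<Sum>i\<in>S. \<Sum>k\<in>T. \<Sum>j\<in>S. \<Sum>m\<in>T. ?F i j k m)"
    unfolding linrep_def by (simp add: sum.cartesian_product' mpow_product mult_ac)
  also have "\<dots> = linrep S l M g n * linrep T l' N g' n"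
    unfolding linrep_def by (simp add: sum_product)
  finally show ?thesis by simp
qed

lemma mult_N_rational:
  assumes "N_rational a" "N_rational b"
  shows "N_rational (\<lambda>n. a n * b n)"
proof -
  obtain r1 :: nat and l1 M1 g1 where "a = linrep {..<r1} l1 M1 g1"
    using assms(1) unfolding N_rational_iff_linrep by blast
  moreover obtain r2 :: nat and l2 M2 g2 where "b = linrep {..<r2} l2 M2 g2"
    using assms(2) unfolding N_rational_iff_linrep by blast
  ultimately show ?thesis
    by (simp add: linrep_mult linrep_N_rational)
qed

lemma mpow_Suc_left:
  assumes "finite S" "i \<in> S" "j \<in> S"
  shows "mpow S M (Suc n) i j = (\<Sum>k\<in>S. M i k * mpow S M n k j)"
  using assms(2,3)
proof (induction n arbitrary: i j)
  case 0
  then show ?case using assms(1) by simp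
next
  case (Suc n)
  have "mpow S M (Suc (Suc n)) i j = (\<Sum>k\<in>S. (\<Sum>m\<in>S. M i m * mpow S M n m k) * M k j)"
    using Suc by (simp del: mpow.simps(2) add: mpow.simps(2)[of S M "Suc n"])
  also have "\<dots> = (\<Sum>m\<in>S. M i m * (\<Sum>k\<in>S. mpow S M n m k * M k j))"
    by (simp add: sum_distrib_left sum_distrib_right mult.assoc) (rule sum.swap)
  finally show ?case by simp
qed

text \<open>Prepending a term: a new initial state None, which outputs c and then moves into the old
  states with the old initial weights.\<close>

lemma prepend_N_rational:
  assumes "N_rational b"
  shows "N_rational (\<lambda>n. if n = 0 then c else b (n - 1))"
proof -
  obtain r :: nat and l M g where b: "b = linrep {..<r} l M g"
    using assms unfolding N_rational_iff_linrep by blast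
  define S where "S = insert None (Some ` {..<r})"
  define M' where "M' = (\<lambda>i j. case (i, j) of (None, Some k) \<Rightarrow> l k | (Some i, Some j) \<Rightarrow> M i j | _ \<Rightarrow> 0)"
  define g' where "g' = case_option c g"
  have fin: "finite S" by (simp add: S_def)
  have sum_S: "(\<Sum>k\<in>S. f k) = f None + (\<Sum>k<r. f (Some k))" for f :: "nat option \<Rightarrow> nat"
    by (simp add: S_def sum.reindex)
  have old_states: "mpow S M' n (Some i) (Some j) = mpow {..<r} M n i j \<and> mpow S M' n (Some i) None = 0"
    for n i j
    by (induction n arbitrary: j) (simp_all add: sum_S M'_def)
  have members: "None \<in> S" "\<And>j. j < r \<Longrightarrow> Some j \<in> S" by (simp_all add: S_def)
  have start: "mpow S M' (Suc m) None j = (\<Sum>k<r. l k * mpow S M' m (Some k) j)" if "j \<in> S" for m j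
    using mpow_Suc_left[OF fin members(1) that, where M = M' and n = m] by (simp add: sum_S M'_def)
  have "linrep S (\<lambda>i. of_bool (i = None)) M' g' n = (if n = 0 then c else b (n - 1))" for n
  proof (cases n)
    case 0
    then show ?thesis by (simp add: linrep_def sum_S g'_def)
  next
    case (Suc m)
    have "linrep S (\<lambda>i. of_bool (i = None)) M' g' n
        = mpow S M' n None None * c + (\<Sum>j<r. mpow S M' n None (Some j) * g j)"
      by (simp add: linrep_def sum_S g'_def)
    also have "\<dots> = (\<Sum>j<r. \<Sum>k<r. l k * mpow {..<r} M m k j * g j)"
      using start Suc by (simp add: members old_states sum_distrib_right)
    also have "\<dots> = b m"
      unfolding b linrep_def by (rule sum.swap)
    finally show ?thesis using Suc by simp
  qed
  then have "(\<lambda>n. if n = 0 then c else b (n - 1)) = linrep S (\<lambda>i. of_bool (i = None)) M' g'"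
    by (simp add: fun_eq_iff)
  then show ?thesis using linrep_N_rational[OF fin] by simp
qed

lemma shift_N_rational:
  assumes "N_rational (\<lambda>n. a (n + K))"
  shows "N_rational a"
  using assms
proof (induction K)
  case (Suc K)
  have "(\<lambda>n. a (n + K)) = (\<lambda>n. if n = 0 then a K else a (n - 1 + Suc K))"
    by (auto simp: fun_eq_iff)
  then show ?case using Suc prepend_N_rational[OF Suc.prems] by simp
qed simp

text \<open>The dilation automaton: the states (k, i) carry a counter k modulo L, and M acts only when
  the counter wraps around.  Its powers are those of M, slowed down by the factor L.\<close>

definition dilate_mat :: "nat \<Rightarrow> ('a \<Rightarrow> 'a \<Rightarrow> nat) \<Rightarrow> nat \<times> 'a \<Rightarrow> nat \<times> 'a \<Rightarrow> nat" where
  "dilate_mat L M = (\<lambda>(k, i) (k', j). if Suc k < L then of_bool (k' = Suc k) * of_bool (i = j)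
                                       else of_bool (k' = 0) * M i j)"

lemma mpow_dilate_mat:
  assumes "finite S" "0 < L" "k < L" "j \<in> S"
  shows "mpow ({..<L} \<times> S) (dilate_mat L M) n (0, i) (k, j) = of_bool (k = n mod L) * mpow S M (n div L) i j"
  using assms(3,4)
proof (induction n arbitrary: k j)
  case 0
  then show ?case using assms(2) by auto
next
  case (Suc n)
  let ?M' = "dilate_mat L M"
  have "mpow ({..<L} \<times> S) ?M' (Suc n) (0, i) (k, j)
      = (\<Sum>k'<L. \<Sum>j'\<in>S. mpow ({..<L} \<times> S) ?M' n (0, i) (k', j') * ?M' (k', j') (k, j))"
    by (simp add: sum.cartesian_product')
  also have "\<dots> = (\<Sum>k'<L. \<Sum>j'\<in>S. of_bool (k' = n mod L) * (mpow S M (n div L) i j' * ?M' (k', j') (k, j)))"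
    using Suc.IH by (auto simp: mult.assoc intro!: sum.cong)
  also have "\<dots> = (\<Sum>j'\<in>S. mpow S M (n div L) i j' * ?M' (n mod L, j') (k, j))"
    using assms(2) by (simp add: sum_distrib_left[symmetric])
  also have "\<dots> = of_bool (k = Suc n mod L) * mpow S M (Suc n div L) i j"
  proof (cases "Suc (n mod L) < L")
    case True
    then have "Suc n mod L = Suc (n mod L)" "Suc n div L = n div L"
      by (simp_all add: mod_Suc div_Suc)
    then show ?thesis
      using True Suc.prems assms(1) by (simp add: dilate_mat_def mult.left_commute[of "of_bool _"])
  next
    case False
    then have "Suc (n mod L) = L"
      using mod_less_divisor[OF assms(2), of n] by linarith
    then have "Suc n mod L = 0" "Suc n div L = Suc (n div L)"
      by (simp_all add: mod_Suc div_Suc)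
    then show ?thesis
      using False by (simp add: dilate_mat_def mult.left_commute[of "of_bool _"] sum_distrib_left)
  qed
  finally show ?case .
qed

lemma dilate_N_rational:
  assumes "N_rational b" "s < L"
  shows "N_rational (\<lambda>n. of_bool (n mod L = s) * b (n div L))"
proof -
  obtain r :: nat and l M g where b: "b = linrep {..<r} l M g"
    using assms unfolding N_rational_iff_linrep by blast
  define S where "S = {..<L} \<times> {..<r}"
  define l' where "l' = (\<lambda>(k :: nat, i). if k = 0 then l i else 0)"
  define g' where "g' = (\<lambda>(k, j). if k = s then g j else 0)"
  have L: "0 < L" using assms(2) by simp
  have "linrep S l' (dilate_mat L M) g' n = of_bool (n mod L = s) * b (n div L)" for n
  proof -
    have "linrep S l' (dilate_mat L M) g' n
        = (\<Sum>i\<in>{0} \<times> {..<r}. \<Sum>j\<in>{s} \<times> {..<r}. l' i * mpow S (dilate_mat L M) n i j * g' j)"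
      by (rule linrep_support) (auto simp: S_def l'_def g'_def L assms(2) split: if_splits)
    also have "\<dots> = (\<Sum>i<r. \<Sum>j<r. l i * mpow S (dilate_mat L M) n (0, i) (s, j) * g j)"
      by (simp add: sum.cartesian_product' l'_def g'_def)
    also have "\<dots> = of_bool (n mod L = s) * b (n div L)"
      using assms(2) L by (simp add: S_def mpow_dilate_mat b linrep_def sum_distrib_left mult_ac)
    finally show ?thesis .
  qed
  then have "(\<lambda>n. of_bool (n mod L = s) * b (n div L)) = linrep S l' (dilate_mat L M) g'"
    by (simp add: fun_eq_iff)
  then show ?thesis using linrep_N_rational[of S] by (simp add: S_def)
qed

lemma interleave_N_rational:
  assumes "0 < L" "\<And>s. s < L \<Longrightarrow> N_rational (\<lambda>m. a (L * m + s))"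
  shows "N_rational a"
proof -
  have "N_rational (\<lambda>n. \<Sum>s<L. of_bool (n mod L = s) * a (L * (n div L) + s))"
    using assms(2) by (intro sum_N_rational dilate_N_rational) auto
  moreover have "(\<Sum>s<L. of_bool (n mod L = s) * a (L * (n div L) + s)) = a n" for n
    using assms(1) by (simp add: eq_commute[of "n mod L"])
  ultimately show ?thesis by simp
qed

section \<open>2x2 matrices\<close>

datatype 'a mat2 = Mat2 'a 'a 'a 'a

fun mul2 :: "'a::semiring_1 mat2 \<Rightarrow> 'a mat2 \<Rightarrow> 'a mat2" where
  "mul2 (Mat2 a b c d) (Mat2 e f g h) = Mat2 (a * e + b * g) (a * f + b * h) (c * e + d * g) (c * f + d * h)"

definition one2 :: "'a::semiring_1 mat2" where
  "one2 = Mat2 1 0 0 1"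

fun pow2 :: "'a::semiring_1 mat2 \<Rightarrow> nat \<Rightarrow> 'a mat2" where
  "pow2 A 0 = one2"
| "pow2 A (Suc n) = mul2 (pow2 A n) A"

fun entry2 :: "'a mat2 \<Rightarrow> nat \<Rightarrow> nat \<Rightarrow> 'a" where
  "entry2 (Mat2 a b c d) i j = (if i = 0 then if j = 0 then a else b else if j = 0 then c else d)"

fun unimodular :: "nat mat2 \<Rightarrow> bool" where
  "unimodular (Mat2 a b c d) \<longleftrightarrow> a * d = b * c + 1"

lemma mul2_assoc: "mul2 (mul2 A B) C = mul2 A (mul2 B C)"
  by (cases A; cases B; cases C) (simp add: algebra_simps)

lemma mul2_one2 [simp]: "mul2 one2 A = A" "mul2 A one2 = A"
  by (cases A; simp add: one2_def)+

lemma mul2_pow2: "mul2 A (pow2 A m) = pow2 A (Suc m)"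
  by (induction m) (simp_all add: mul2_assoc[symmetric])

lemma entry2_mul2:
  assumes "i < 2" "j < 2"
  shows "entry2 (mul2 A B) i j = (\<Sum>k<2. entry2 A i k * entry2 B k j)"
  using assms by (cases A; cases B) (auto simp: numeral_2_eq_2 less_Suc_eq)

lemma entry2_pow2:
  assumes "i < 2" "j < 2"
  shows "entry2 (pow2 A n) i j = mpow {..<2} (entry2 A) n i j"
  using assms(2)
proof (induction n arbitrary: j)
  case 0
  then show ?case using assms(1) by (auto simp: one2_def numeral_2_eq_2 less_Suc_eq)
next
  case (Suc n)
  then show ?case using assms(1) by (simp add: entry2_mul2)
qed

text \<open>The sequence m \<mapsto> (A^m B C^m)_{11} is a sum of products of entries of powers, hence
  N-rational.  This is the shape of the tiling values along a ray.\<close>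

lemma conjugation_N_rational:
  fixes A B C :: "nat mat2"
  shows "N_rational (\<lambda>m. entry2 (mul2 (mul2 (pow2 A m) B) (pow2 C m)) 0 0)"
proof -
  have expand: "entry2 (mul2 (mul2 (pow2 A m) B) (pow2 C m)) 0 0
      = (\<Sum>k<2. \<Sum>j<2. entry2 (pow2 A m) 0 j * entry2 B j k * entry2 (pow2 C m) k 0)" for m
    by (simp add: entry2_mul2 sum_distrib_right)
  have "N_rational (\<lambda>m. entry2 (pow2 A m) 0 j * entry2 B j k * entry2 (pow2 C m) k 0)"
    if "j < 2" "k < 2" for j k
    using that by (intro mult_N_rational const_N_rational)
      (simp_all add: entry2_pow2 mpow_N_rational)
  then show ?thesis
    unfolding expand by (intro sum_N_rational) auto
qed

section \<open>The frontier as a pair of letter-counting functions\<close>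

definition counts :: "(int \<Rightarrow> letter) \<Rightarrow> letter \<Rightarrow> (int \<Rightarrow> int) \<Rightarrow> bool" where
  "counts x l f \<longleftrightarrow> (\<forall>i. f i = f (i - 1) + of_bool (x i = l))"

lemma embedding_counts:
  assumes "frontier_embedding x P"
  shows "counts x X (\<lambda>i. fst (P i))" "counts x Y (\<lambda>i. snd (P i))"
proof -
  have step: "P i = (if x i = X then (fst (P (i - 1)) + 1, snd (P (i - 1)))
                     else (fst (P (i - 1)), snd (P (i - 1)) + 1))" for i
    using assms unfolding frontier_embedding_def by blast
  show "counts x X (\<lambda>i. fst (P i))" "counts x Y (\<lambda>i. snd (P i))"
    unfolding counts_def
  proof (safe intro!: allI)
    fix i
    show "fst (P i) = fst (P (i - 1)) + of_bool (x i = X)"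
      by (subst step) (cases "x i"; simp)
    show "snd (P i) = snd (P (i - 1)) + of_bool (x i = Y)"
      by (subst step) (cases "x i"; simp)
  qed
qed

lemma counts_step:
  assumes "counts x l f"
  shows "f (i + 1) = f i + of_bool (x (i + 1) = l)"
  using assms unfolding counts_def by (metis add_diff_cancel_right')

lemma counts_mono:
  assumes "counts x l f" "i \<le> j"
  shows "f i \<le> f j"
  using assms(2)
proof (induction j rule: int_ge_induct)
  case (step j)
  then show ?case using counts_step[OF assms(1), of j] by simp
qed simp

lemma counts_cross:
  assumes "counts x l f" "f i \<le> z" "z < f j"
  shows "\<exists>k. i \<le> k \<and> k < j \<and> f k = z \<and> x (k + 1) = l"
proof -
  have "i \<le> j" using assms counts_mono[OF assms(1), of j i] by linarith
  then show ?thesis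
    using assms(3)
  proof (induction j rule: int_ge_induct)
    case base
    then show ?case using assms(2) by simp
  next
    case (step j)
    show ?case
    proof (cases "z < f j")
      case True
      then show ?thesis using step.IH by force
    next
      case False
      then show ?thesis
        using step counts_step[OF assms(1), of j] by (intro exI[of _ j]) (auto simp: of_bool_def split: if_splits)
    qed
  qed
qed

lemma admissible_letter_right:
  assumes "admissible_frontier x"
  shows "\<exists>m\<ge>N. x m = l"
proof -
  have "\<exists>m\<ge>N. m \<ge> 0 \<and> x m \<noteq> (if l = X then Y else X)"
    using assms unfolding admissible_frontier_def by blast
  then obtain m where "m \<ge> N" "x m \<noteq> (if l = X then Y else X)" by blast
  then show ?thesis by (intro exI[of _ m]) (cases l; cases "x m"; simp)
qed

lemma admissible_letter_left:
  assumes "admissible_frontier x"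
  shows "\<exists>m\<le>N. x m = l"
proof -
  have "\<exists>m\<le>N. m \<le> 0 \<and> x m \<noteq> (if l = X then Y else X)"
    using assms unfolding admissible_frontier_def by blast
  then obtain m where "m \<le> N" "x m \<noteq> (if l = X then Y else X)" by blast
  then show ?thesis by (intro exI[of _ m]) (cases l; cases "x m"; simp)
qed

lemma counts_unbounded_above:
  assumes "admissible_frontier x" "counts x l f"
  shows "\<exists>j. K \<le> f j"
proof -
  have "\<exists>j. f 0 + int n \<le> f j" for n
  proof (induction n)
    case (Suc n)
    then obtain i where i: "f 0 + int n \<le> f i" by blast
    obtain m where m: "i + 1 \<le> m" "x m = l" using admissible_letter_right[OF assms(1)] by blast
    have "f m = f (m - 1) + of_bool (x m = l)" using assms(2) unfolding counts_def by blast
    then have "f m = f (m - 1) + 1" using m by simp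
    moreover have "f i \<le> f (m - 1)" using counts_mono[OF assms(2)] m by simp
    ultimately show ?case using i by (intro exI[of _ m]) simp
  qed auto
  then obtain j where "f 0 + int (nat (K - f 0)) \<le> f j" by blast
  then show ?thesis by (intro exI[of _ j]) linarith
qed

lemma counts_unbounded_below:
  assumes "admissible_frontier x" "counts x l f"
  shows "\<exists>j. f j \<le> K"
proof -
  have "\<exists>j. f j \<le> f 0 - int n" for n
  proof (induction n)
    case (Suc n)
    then obtain i where i: "f i \<le> f 0 - int n" by blast
    obtain m where m: "m \<le> i" "x m = l" using admissible_letter_left[OF assms(1)] by blast
    have "f m = f (m - 1) + of_bool (x m = l)" using assms(2) unfolding counts_def by blast
    then have "f m = f (m - 1) + 1" using m by simp
    moreover have "f m \<le> f i" using counts_mono[OF assms(2)] m by simp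
    ultimately show ?case using i by (intro exI[of _ "m - 1"]) simp
  qed auto
  then obtain j where "f j \<le> f 0 - int (nat (f 0 - K))" by blast
  then show ?thesis by (intro exI[of _ j]) linarith
qed

lemma counts_reaches_above:
  assumes "admissible_frontier x" "counts x l f" "f i \<le> z"
  shows "\<exists>c\<ge>i. f c = z"
proof -
  obtain j where "z + 1 \<le> f j" using counts_unbounded_above[OF assms(1,2)] by blast
  then show ?thesis using counts_cross[OF assms(2,3), of j] by fastforce
qed

lemma counts_reaches_below:
  assumes "admissible_frontier x" "counts x l f" "z \<le> f i"
  shows "\<exists>c\<le>i. f c = z"
proof -
  obtain j where j: "f j \<le> z - 1" using counts_unbounded_below[OF assms(1,2)] by blast
  obtain k where "k < i" "f k = z - 1" "x (k + 1) = l"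
    using counts_cross[OF assms(2) j, of i] assms(3) by auto
  then show ?thesis using counts_step[OF assms(2), of k] by (intro exI[of _ "k + 1"]) simp
qed

lemma counts_surj:
  assumes "admissible_frontier x" "counts x l f"
  shows "\<exists>c. f c = z"
  using counts_reaches_above[OF assms, of 0 z] counts_reaches_below[OF assms, of z 0] by force

lemma counts_eventually_right:
  assumes "admissible_frontier x" "counts x l f" "1 \<le> a"
  shows "\<exists>N. \<forall>n\<ge>N. \<exists>c\<ge>B. f c = q + int n * a"
proof (rule exI, intro allI impI)
  fix n assume "nat (f B - q) \<le> n"
  moreover have "int n * 1 \<le> int n * a" using assms(3) by (intro mult_left_mono) auto
  ultimately have "f B \<le> q + int n * a" by linarith
  then show "\<exists>c\<ge>B. f c = q + int n * a" using counts_reaches_above[OF assms(1,2)] by blast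
qed

lemma counts_eventually_left:
  assumes "admissible_frontier x" "counts x l f" "b \<le> -1"
  shows "\<exists>N. \<forall>n\<ge>N. \<exists>r\<le>B. f r = q + int n * b"
proof (rule exI, intro allI impI)
  fix n assume "nat (q - f B) \<le> n"
  moreover have "int n * b \<le> int n * -1" using assms(3) by (intro mult_left_mono) auto
  ultimately have "q + int n * b \<le> f B" by linarith
  then show "\<exists>r\<le>B. f r = q + int n * b" using counts_reaches_below[OF assms(1,2)] by blast
qed

lemma periodic_right_mult:
  assumes "\<forall>n\<ge>n0. x n = x (n + p)" "0 \<le> p" "n0 \<le> n"
  shows "x (n + int m * p) = x n"
proof (induction m)
  case (Suc m)
  have "0 \<le> int m * p" using assms(2) by simp
  then have "n0 \<le> n + int m * p" using assms(3) by linarith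
  then have "x (n + int m * p) = x (n + int m * p + p)" using assms(1) by blast
  then show ?case using Suc by (simp add: algebra_simps)
qed simp

lemma periodic_left_mult:
  assumes "\<forall>n\<le>n0'. x n = x (n - p)" "0 \<le> p" "n \<le> n0'"
  shows "x (n - int m * p) = x n"
proof (induction m)
  case (Suc m)
  have "0 \<le> int m * p" using assms(2) by simp
  then have "n - int m * p \<le> n0'" using assms(3) by linarith
  then have "x (n - int m * p) = x (n - int m * p - p)" using assms(1) by blast
  then show ?case using Suc by (simp add: algebra_simps)
qed simp

lemma counts_periodic_right:
  assumes "counts x l f" "\<forall>n\<ge>n0. x n = x (n + p)" "0 \<le> p" "n0 - 1 \<le> c"
  shows "f (c + int m * p) = f c + int m * (f (n0 - 1 + p) - f (n0 - 1))"
proof -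
  have period: "f (j + p) - f j = f (n0 - 1 + p) - f (n0 - 1)" if "n0 - 1 \<le> j" for j
    using that
  proof (induction j rule: int_ge_induct)
    case (step j)
    have "x (j + 1 + p) = x (j + 1)" using assms(2) step by simp
    then show ?case
      using step counts_step[OF assms(1), of j] counts_step[OF assms(1), of "j + p"] by (simp add: algebra_simps)
  qed simp
  show ?thesis
  proof (induction m)
    case (Suc m)
    have "0 \<le> int m * p" using assms(3) by simp
    then have "n0 - 1 \<le> c + int m * p" using assms(4) by linarith
    then show ?case using Suc period[of "c + int m * p"] by (simp add: algebra_simps)
  qed simp
qed

lemma counts_periodic_left:
  assumes "counts x l f" "\<forall>n\<le>n0'. x n = x (n - p)" "0 \<le> p" "r \<le> n0'"
  shows "f (r - int m * p) = f r - int m * (f n0' - f (n0' - p))"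
proof -
  have period: "f j - f (j - p) = f n0' - f (n0' - p)" if "j \<le> n0'" for j
    using that
  proof (induction j rule: int_le_induct)
    case (step j)
    have "x j = x (j - p)" using assms(2) step by simp
    then show ?case
      using step counts_step[OF assms(1), of "j - 1"] counts_step[OF assms(1), of "j - 1 - p"]
      by (simp add: algebra_simps)
  qed simp
  show ?thesis
  proof (induction m)
    case (Suc m)
    have "0 \<le> int m * p" using assms(3) by simp
    then have "r - int m * p \<le> n0'" using assms(4) by linarith
    then show ?case using Suc period[of "r - int m * p"] by (simp add: algebra_simps)
  qed simp
qed

section \<open>Products of letter matrices along the frontier\<close>

fun letter_mat :: "letter \<Rightarrow> nat mat2" where
  "letter_mat X = Mat2 1 0 1 1"
| "letter_mat Y = Mat2 1 1 0 1"

fun word_mat :: "(int \<Rightarrow> letter) \<Rightarrow> int \<Rightarrow> nat \<Rightarrow> nat mat2" where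
  "word_mat x r 0 = one2"
| "word_mat x r (Suc k) = mul2 (word_mat x r k) (letter_mat (x (r + int k + 1)))"

lemma word_mat_append: "word_mat x r (k1 + k2) = mul2 (word_mat x r k1) (word_mat x (r + int k1) k2)"
  by (induction k2) (simp_all add: mul2_assoc algebra_simps)

lemma word_mat_Suc_left: "word_mat x r (Suc k) = mul2 (letter_mat (x (r + 1))) (word_mat x (r + 1) k)"
  using word_mat_append[of x r 1 k] by simp

lemma word_mat_cong:
  "(\<And>i. i < k \<Longrightarrow> x' (r' + int i + 1) = x (r + int i + 1)) \<Longrightarrow> word_mat x' r' k = word_mat x r k"
  by (induction k) auto

lemma word_mat_unimodular: "unimodular (word_mat x r k)"
proof (induction k)
  case 0
  show ?case by (simp add: one2_def)
next
  case (Suc k)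
  obtain a b c d where "word_mat x r k = Mat2 a b c d" by (cases "word_mat x r k")
  with Suc show ?case by (cases "x (r + int k + 1)") (simp_all add: algebra_simps)
qed

lemma word_mat_periodic_right:
  assumes "\<forall>n\<ge>r + 1. x n = x (n + int K)"
  shows "word_mat x r (m * K) = pow2 (word_mat x r K) m"
proof (induction m)
  case (Suc m)
  have "word_mat x (r + int (m * K)) K = word_mat x r K"
  proof (rule word_mat_cong)
    fix i
    have "x (r + int i + 1 + int m * int K) = x (r + int i + 1)"
      using periodic_right_mult[OF assms] by simp
    then show "x (r + int (m * K) + int i + 1) = x (r + int i + 1)" by (simp add: algebra_simps)
  qed
  then show ?case
    using Suc word_mat_append[of x r "m * K" K] by (simp add: add.commute)
qed simp

lemma word_mat_periodic_left:
  assumes "\<forall>n\<le>r. x n = x (n - int K)"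
  shows "word_mat x (r - int (m * K)) (m * K) = pow2 (word_mat x (r - int K) K) m"
proof (induction m)
  case (Suc m)
  have "word_mat x (r - int (Suc m * K)) K = word_mat x (r - int K) K"
  proof (rule word_mat_cong)
    fix i
    assume "i < K"
    then have "x (r - int K + int i + 1 - int m * int K) = x (r - int K + int i + 1)"
      using periodic_left_mult[OF assms] by simp
    then show "x (r - int (Suc m * K) + int i + 1) = x (r - int K + int i + 1)" by (simp add: algebra_simps)
  qed
  moreover have "word_mat x (r - int (Suc m * K)) (Suc m * K)
      = mul2 (word_mat x (r - int (Suc m * K)) K) (word_mat x (r - int (m * K)) (m * K))"
    using word_mat_append[of x "r - int (Suc m * K)" K "m * K"] by simp
  ultimately show ?case
    using Suc by (simp add: mul2_pow2 del: pow2.simps)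
qed simp

text \<open>Uniqueness step of the tiling formula: if three corners of a 2x2 block of an SL2-tiling
  are the upper-left entries of N, Y N and N X for a unimodular N, then the fourth corner is the
  upper-left entry of Y N X.\<close>

lemma unimodular_corner:
  assumes "unimodular N" "0 < entry2 N 0 0"
    and "int (entry2 N 0 0) * int T
         - int (entry2 (mul2 (letter_mat Y) N) 0 0) * int (entry2 (mul2 N (letter_mat X)) 0 0) = 1"
  shows "T = entry2 (mul2 (mul2 (letter_mat Y) N) (letter_mat X)) 0 0"
proof -
  obtain a b c d where N: "N = Mat2 a b c d" by (cases N)
  have "int a * int d = int b * int c + 1" using assms(1) N by (simp flip: of_nat_mult)
  then have "int a * int T = int a * int (a + b + c + d)"
    using assms(3) N by (simp add: algebra_simps)
  then show ?thesis using assms(2) N by simp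
qed

lemma stretch_cases:
  fixes x :: "int \<Rightarrow> letter"
  assumes "r \<le> c"
  obtains (equal) "c = r" | (first_X) "r < c" "x (r + 1) = X" | (last_Y) "r < c" "x c = Y"
    | (corner) "r + 1 < c" "x (r + 1) = Y" "x c = X"
proof (cases "c = r")
  case False
  then have "r < c" using assms by simp
  show ?thesis
  proof (cases "x (r + 1) = X \<or> x c = Y")
    case True
    then show ?thesis using \<open>r < c\<close> that(2,3) by blast
  next
    case False
    then have "x (r + 1) = Y" "x c = X" using letter.exhaust by blast+
    then have "r + 1 \<noteq> c" by auto
    then show ?thesis using \<open>r < c\<close> \<open>x (r + 1) = Y\<close> \<open>x c = X\<close> that(4) by simp
  qed
qed (rule that(1))

section \<open>The tiling in terms of the frontier\<close>

locale tiled_frontier =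
  fixes x :: "int \<Rightarrow> letter" and P :: "int \<Rightarrow> int \<times> int" and t :: "int \<times> int \<Rightarrow> nat"
  assumes emb: "frontier_embedding x P" and til: "SL2_tiling t" and ext: "extends_frontier t P"
begin

lemma counts_col: "counts x X (\<lambda>i. fst (P i))"
  and counts_row: "counts x Y (\<lambda>i. snd (P i))"
  using embedding_counts[OF emb] by auto

lemma tiling_pos: "0 < t q"
  using til unfolding SL2_tiling_def by blast

lemma tiling_rel: "int (t (a, b + 1)) * int (t (a + 1, b)) - int (t (a, b)) * int (t (a + 1, b + 1)) = 1"
  using til unfolding SL2_tiling_def by blast

text \<open>The corner step of the product formula: when the stretch r .. c starts with the letter y
  and ends with the letter x, the point (fst (P c), snd (P r)) is the south-east corner of a 2x2 block whose other three corners are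
  described by the shorter stretches from r + 1 to c - 1, from r to c - 1 and from r + 1 to c.\<close>

lemma formula_corner_step:
  assumes "r + 1 < c" "x (r + 1) = Y" "x c = X"
    and NW: "t (fst (P (c - 1)), snd (P (r + 1))) = entry2 (word_mat x (r + 1) (nat (c - 1 - (r + 1)))) 0 0"
    and W: "t (fst (P (c - 1)), snd (P r)) = entry2 (word_mat x r (nat (c - 1 - r))) 0 0"
    and S: "t (fst (P c), snd (P (r + 1))) = entry2 (word_mat x (r + 1) (nat (c - (r + 1)))) 0 0"
  shows "t (fst (P c), snd (P r)) = entry2 (word_mat x r (nat (c - r))) 0 0"
proof -
  define N where "N = word_mat x (r + 1) (nat (c - 1 - (r + 1)))"
  have last: "word_mat x i (nat (c - i)) = mul2 (word_mat x i (nat (c - 1 - i))) (letter_mat X)"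
    if "i < c" for i
    using that assms(3) word_mat.simps(2)[of x i "nat (c - 1 - i)"] by (simp add: Suc_nat_eq_nat_zadd1)
  have first: "word_mat x r (nat (j - r)) = mul2 (letter_mat Y) (word_mat x (r + 1) (nat (j - (r + 1))))"
    if "r < j" for j
  proof -
    have "nat (j - r) = Suc (nat (j - (r + 1)))" using that by simp
    then show ?thesis by (simp only: word_mat_Suc_left assms(2))
  qed
  have row: "snd (P (r + 1)) = snd (P r) + 1" using counts_step[OF counts_row, of r] assms(2) by simp
  have col: "fst (P (c - 1)) + 1 = fst (P c)" using counts_step[OF counts_col, of "c - 1"] assms(3) by simp
  have "int (entry2 N 0 0) * int (t (fst (P c), snd (P r)))
      - int (entry2 (mul2 (letter_mat Y) N) 0 0) * int (entry2 (mul2 N (letter_mat X)) 0 0) = 1"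
    using tiling_rel[of "fst (P (c - 1))" "snd (P r)"] col row NW W S assms(1) first[of "c - 1"] last[of "r + 1"]
    unfolding N_def by (simp add: algebra_simps)
  moreover have "0 < entry2 N 0 0" using NW tiling_pos unfolding N_def by metis
  moreover have "word_mat x r (nat (c - r)) = mul2 (mul2 (letter_mat Y) N) (letter_mat X)"
    using assms(1) last[of r] first[of "c - 1"] unfolding N_def by simp
  ultimately show ?thesis
    using unimodular_corner[OF word_mat_unimodular] unfolding N_def by metis
qed

text \<open>The product formula, by induction on c - r: if the stretch starts with the letter x or ends
  with the letter y, the same point is described by a shorter stretch of the frontier; otherwise
  \<open>formula_corner_step\<close> applies.\<close>

lemma tiling_formula:
  assumes "r \<le> c"
  shows "t (fst (P c), snd (P r)) = entry2 (word_mat x r (nat (c - r))) 0 0"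
  using assms
proof (induction "nat (c - r)" arbitrary: r c rule: less_induct)
  case less
  from less.prems show ?case
  proof (cases rule: stretch_cases[where x = x])
    case equal
    then show ?thesis using ext by (simp add: extends_frontier_def one2_def)
  next
    case first_X
    have "snd (P (r + 1)) = snd (P r)" using counts_step[OF counts_row, of r] first_X by simp
    moreover have "t (fst (P c), snd (P (r + 1))) = entry2 (word_mat x (r + 1) (nat (c - (r + 1)))) 0 0"
      using less.hyps[of c "r + 1"] first_X by simp
    moreover have "nat (c - r) = Suc (nat (c - (r + 1)))" using first_X by simp
    then have "word_mat x r (nat (c - r)) = mul2 (letter_mat X) (word_mat x (r + 1) (nat (c - (r + 1))))"
      by (simp only: word_mat_Suc_left first_X)
    ultimately show ?thesis
      by (cases "word_mat x (r + 1) (nat (c - (r + 1)))") simp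
  next
    case last_Y
    have "fst (P (c - 1)) = fst (P c)" using counts_step[OF counts_col, of "c - 1"] last_Y by simp
    moreover have "t (fst (P (c - 1)), snd (P r)) = entry2 (word_mat x r (nat (c - 1 - r))) 0 0"
      using less.hyps[of "c - 1" r] last_Y by simp
    moreover have "word_mat x r (nat (c - r)) = mul2 (word_mat x r (nat (c - 1 - r))) (letter_mat Y)"
      using last_Y word_mat.simps(2)[of x r "nat (c - 1 - r)"] by (simp add: Suc_nat_eq_nat_zadd1)
    ultimately show ?thesis
      by (cases "word_mat x r (nat (c - 1 - r))") simp
  next
    case corner
    have "t (fst (P (c - 1)), snd (P (r + 1))) = entry2 (word_mat x (r + 1) (nat (c - 1 - (r + 1)))) 0 0"
      using less.hyps[of "c - 1" "r + 1"] corner by simp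
    moreover have "t (fst (P (c - 1)), snd (P r)) = entry2 (word_mat x r (nat (c - 1 - r))) 0 0"
      using less.hyps[of "c - 1" r] corner by simp
    moreover have "t (fst (P c), snd (P (r + 1))) = entry2 (word_mat x (r + 1) (nat (c - (r + 1)))) 0 0"
      using less.hyps[of c "r + 1"] corner by simp
    ultimately show ?thesis using formula_corner_step[OF corner] by blast
  qed
qed

text \<open>Values along a ray whose frontier positions move by whole periods K_c to the right of c and
  K_r to the left of r are of the form (A^m B C^m)_{11}.\<close>

lemma ray_block:
  assumes "r \<le> c" "\<forall>n\<ge>c + 1. x n = x (n + int Kc)" "\<forall>n\<le>r. x n = x (n - int Kr)"
  shows "N_rational (\<lambda>m. t (fst (P (c + int (m * Kc))), snd (P (r - int (m * Kr)))))"
proof -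
  define d where "d = nat (c - r)"
  have c: "c = r + int d" using assms(1) by (simp add: d_def)
  have "t (fst (P (c + int (m * Kc))), snd (P (r - int (m * Kr))))
      = entry2 (mul2 (mul2 (pow2 (word_mat x (r - int Kr) Kr) m) (word_mat x r d)) (pow2 (word_mat x c Kc) m)) 0 0"
    for m
  proof -
    have "c + int (m * Kc) - (r - int (m * Kr)) = int (m * Kr + (d + m * Kc))"
      using c by simp
    then have "nat (c + int (m * Kc) - (r - int (m * Kr))) = m * Kr + (d + m * Kc)"
      by (simp only: nat_int)
    moreover have "r - int (m * Kr) \<le> c + int (m * Kc)" using assms(1) by linarith
    ultimately have "t (fst (P (c + int (m * Kc))), snd (P (r - int (m * Kr))))
        = entry2 (word_mat x (r - int (m * Kr)) (m * Kr + (d + m * Kc))) 0 0"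
      using tiling_formula by simp
    also have "word_mat x (r - int (m * Kr)) (m * Kr + (d + m * Kc))
        = mul2 (word_mat x (r - int (m * Kr)) (m * Kr)) (mul2 (word_mat x r d) (word_mat x c (m * Kc)))"
      by (simp add: word_mat_append c)
    also have "\<dots> = mul2 (pow2 (word_mat x (r - int Kr) Kr) m) (mul2 (word_mat x r d) (pow2 (word_mat x c Kc) m))"
      using assms(2,3) by (simp only: word_mat_periodic_left word_mat_periodic_right)
    finally show ?thesis by (simp add: mul2_assoc)
  qed
  then show ?thesis using conjugation_N_rational by presburger
qed

end

section \<open>South-east rays\<close>

locale periodic_tiled_frontier = tiled_frontier +
  fixes p n0 n0' :: int
  assumes adm: "admissible_frontier x" and period: "1 \<le> p"
    and per_right: "\<forall>n\<ge>n0. x n = x (n + p)" and per_left: "\<forall>n\<le>n0'. x n = x (n - p)"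
begin

definition gain_col :: int where
  "gain_col = fst (P (n0 - 1 + p)) - fst (P (n0 - 1))"

definition gain_row :: int where
  "gain_row = snd (P n0') - snd (P (n0' - p))"

lemma col_shift:
  assumes "n0 - 1 \<le> c"
  shows "fst (P (c + int m * p)) = fst (P c) + int m * gain_col"
  using counts_periodic_right[OF counts_col per_right _ assms] period by (simp add: gain_col_def)

lemma row_shift:
  assumes "r \<le> n0'"
  shows "snd (P (r - int m * p)) = snd (P r) - int m * gain_row"
  using counts_periodic_left[OF counts_row per_left _ assms] period by (simp add: gain_row_def)

text \<open>Both gains are positive: otherwise the columns (rows) of the frontier would be bounded.\<close>

lemma gain_col_pos: "1 \<le> gain_col"
proof (rule ccontr)
  assume "\<not> 1 \<le> gain_col"
  moreover have "0 \<le> gain_col"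
    unfolding gain_col_def using counts_mono[OF counts_col, of "n0 - 1" "n0 - 1 + p"] period by simp
  ultimately have stuck: "fst (P (n0 - 1 + int m * p)) = fst (P (n0 - 1))" for m
    using col_shift[of "n0 - 1" m] by simp
  obtain j where j: "fst (P (n0 - 1)) + 1 \<le> fst (P j)"
    using counts_unbounded_above[OF adm counts_col] by blast
  define m where "m = nat (j - (n0 - 1))"
  have "int m \<le> int m * p" using mult_left_mono[OF period, of "int m"] by simp
  then have "j \<le> n0 - 1 + int m * p" unfolding m_def by linarith
  then have "fst (P j) \<le> fst (P (n0 - 1))"
    using counts_mono[OF counts_col] stuck[of m] by metis
  then show False using j by simp
qed

lemma gain_row_pos: "1 \<le> gain_row"
proof (rule ccontr)
  assume "\<not> 1 \<le> gain_row"
  moreover have "0 \<le> gain_row"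
    unfolding gain_row_def using counts_mono[OF counts_row, of "n0' - p" n0'] period by simp
  ultimately have stuck: "snd (P (n0' - int m * p)) = snd (P n0')" for m
    using row_shift[of n0' m] by simp
  obtain j where j: "snd (P j) \<le> snd (P n0') - 1"
    using counts_unbounded_below[OF adm counts_row] by blast
  define m where "m = nat (n0' - j)"
  have "int m \<le> int m * p" using mult_left_mono[OF period, of "int m"] by simp
  then have "n0' - int m * p \<le> j" unfolding m_def by linarith
  then have "snd (P n0') \<le> snd (P j)"
    using counts_mono[OF counts_row] stuck[of m] by metis
  then show False using j by simp
qed

lemma ray_eventually_deep:
  assumes "0 \<le> a" "b \<le> 0" "(a, b) \<noteq> (0, 0)"
  shows "\<exists>N. \<forall>n\<ge>N. \<exists>r c. snd (P r) = q2 + int n * b \<and> fst (P c) = q1 + int n * a \<and> r \<le> c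
           \<and> (a = 0 \<or> n0 - 1 \<le> c) \<and> (b = 0 \<or> r \<le> n0')"
proof -
  consider (vertical) "a = 0" "b \<le> -1" | (horizontal) "1 \<le> a" "b = 0" | (diagonal) "1 \<le> a" "b \<le> -1"
    using assms by fastforce
  then show ?thesis
  proof cases
    case vertical
    obtain c where "fst (P c) = q1" using counts_surj[OF adm counts_col] by blast
    moreover obtain N where "\<forall>n\<ge>N. \<exists>r\<le>min c n0'. snd (P r) = q2 + int n * b"
      using counts_eventually_left[OF adm counts_row vertical(2)] by blast
    ultimately show ?thesis using vertical by force
  next
    case horizontal
    obtain r where "snd (P r) = q2" using counts_surj[OF adm counts_row] by blast
    moreover obtain N where "\<forall>n\<ge>N. \<exists>c\<ge>max r (n0 - 1). fst (P c) = q1 + int n * a"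
      using counts_eventually_right[OF adm counts_col horizontal(1)] by blast
    ultimately show ?thesis using horizontal by force
  next
    case diagonal
    obtain N1 where "\<forall>n\<ge>N1. \<exists>c\<ge>max n0' (n0 - 1). fst (P c) = q1 + int n * a"
      using counts_eventually_right[OF adm counts_col diagonal(1)] by blast
    moreover obtain N2 where "\<forall>n\<ge>N2. \<exists>r\<le>n0'. snd (P r) = q2 + int n * b"
      using counts_eventually_left[OF adm counts_row diagonal(2)] by blast
    ultimately show ?thesis by (intro exI[of _ "max N1 N2"]) force
  qed
qed

text \<open>Advancing the column index c by (gain_row * a) periods moves the column by
  gain_col * gain_row * a, within the right periodic part.\<close>

lemma column_progression:
  assumes "0 \<le> a" "a = 0 \<or> n0 - 1 \<le> c"
  shows "\<exists>K. (\<forall>m. fst (P (c + int (m * K))) = fst (P c) + int m * (gain_col * gain_row * a))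
             \<and> (\<forall>n\<ge>c + 1. x n = x (n + int K))"
proof (cases "a = 0")
  case False
  define k where "k = nat (gain_row * a)"
  have k: "int k = gain_row * a"
    using gain_row_pos assms(1) by (simp add: k_def)
  have periods: "int (m * (k * nat p)) = int (m * k) * p" for m
    using period by simp
  show ?thesis
  proof (intro exI[of _ "k * nat p"] conjI allI impI)
    fix m
    have "fst (P (c + int (m * k) * p)) = fst (P c) + int (m * k) * gain_col"
      using col_shift[of c "m * k"] assms(2) False by simp
    then show "fst (P (c + int (m * (k * nat p)))) = fst (P c) + int m * (gain_col * gain_row * a)"
      unfolding periods by (simp add: k algebra_simps)
  next
    fix n assume "c + 1 \<le> n"
    then have "n0 \<le> n" using assms(2) False by simp
    from periodic_right_mult[OF per_right _ this, of k] show "x n = x (n + int (k * nat p))"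
      using period by simp
  qed
qed (intro exI[of _ 0], simp)

text \<open>Symmetrically, retreating the row index r by (gain_col * (-b)) periods moves the row by
  gain_col * gain_row * b, within the left periodic part.\<close>

lemma row_progression:
  assumes "b \<le> 0" "b = 0 \<or> r \<le> n0'"
  shows "\<exists>K. (\<forall>m. snd (P (r - int (m * K))) = snd (P r) + int m * (gain_col * gain_row * b))
             \<and> (\<forall>n\<le>r. x n = x (n - int K))"
proof (cases "b = 0")
  case False
  define k where "k = nat (gain_col * - b)"
  have k: "int k = gain_col * - b"
    using gain_col_pos assms(1) by (simp add: k_def mult_nonneg_nonpos)
  have periods: "int (m * (k * nat p)) = int (m * k) * p" for m
    using period by simp
  show ?thesis
  proof (intro exI[of _ "k * nat p"] conjI allI impI)
    fix m
    have "snd (P (r - int (m * k) * p)) = snd (P r) - int (m * k) * gain_row"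
      using row_shift[of r "m * k"] assms(2) False by simp
    then show "snd (P (r - int (m * (k * nat p)))) = snd (P r) + int m * (gain_col * gain_row * b)"
      unfolding periods by (simp add: k algebra_simps)
  next
    fix n assume "n \<le> r"
    then have "n \<le> n0'" using assms(2) False by simp
    from periodic_left_mult[OF per_left _ this, of k] show "x n = x (n - int (k * nat p))"
      using period by simp
  qed
qed (intro exI[of _ 0], simp)

lemma ray_from_deep_point:
  assumes "0 \<le> a" "b \<le> 0" "r \<le> c" "a = 0 \<or> n0 - 1 \<le> c" "b = 0 \<or> r \<le> n0'"
  shows "N_rational (\<lambda>m. t (fst (P c) + int m * (gain_col * gain_row * a),
                           snd (P r) + int m * (gain_col * gain_row * b)))"
proof -
  obtain Kc where col: "\<And>m. fst (P (c + int (m * Kc))) = fst (P c) + int m * (gain_col * gain_row * a)"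
    and per_c: "\<forall>n\<ge>c + 1. x n = x (n + int Kc)"
    using column_progression[OF assms(1,4)] by blast
  obtain Kr where row: "\<And>m. snd (P (r - int (m * Kr))) = snd (P r) + int m * (gain_col * gain_row * b)"
    and per_r: "\<forall>n\<le>r. x n = x (n - int Kr)"
    using row_progression[OF assms(2,5)] by blast
  show ?thesis
    using ray_block[OF assms(3) per_c per_r] unfolding col row .
qed

lemma ray_SE:
  assumes "0 \<le> a" "b \<le> 0" "(a, b) \<noteq> (0, 0)"
  shows "N_rational (\<lambda>n. t (q1 + int n * a, q2 + int n * b))"
proof -
  define L where "L = nat (gain_col * gain_row)"
  have L: "0 < L" "int L = gain_col * gain_row"
    using gain_col_pos gain_row_pos by (simp_all add: L_def mult_pos_pos)
  obtain N where deep: "\<forall>n\<ge>N. \<exists>r c. snd (P r) = q2 + int n * b \<and> fst (P c) = q1 + int n * a \<and> r \<le> c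
                         \<and> (a = 0 \<or> n0 - 1 \<le> c) \<and> (b = 0 \<or> r \<le> n0')"
    using ray_eventually_deep[OF assms] by blast
  show ?thesis
  proof (rule interleave_N_rational[OF L(1)])
    fix s
    have "1 * N \<le> L * N" using L(1) by (intro mult_le_mono1) simp
    then have "N \<le> L * N + s" by linarith
    then obtain r c where rc: "snd (P r) = q2 + int (L * N + s) * b" "fst (P c) = q1 + int (L * N + s) * a"
      "r \<le> c" "a = 0 \<or> n0 - 1 \<le> c" "b = 0 \<or> r \<le> n0'"
      using deep by blast
    have "N_rational (\<lambda>m. t (fst (P c) + int m * (gain_col * gain_row * a),
                              snd (P r) + int m * (gain_col * gain_row * b)))"
      using ray_from_deep_point[OF assms(1,2) rc(3-5)] .
    moreover have "(\<lambda>m. t (fst (P c) + int m * (gain_col * gain_row * a),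
                           snd (P r) + int m * (gain_col * gain_row * b)))
        = (\<lambda>m. t (q1 + int (L * (m + N) + s) * a, q2 + int (L * (m + N) + s) * b))"
      using rc(1,2) L(2) by (simp add: algebra_simps)
    ultimately show "N_rational (\<lambda>m. t (q1 + int (L * m + s) * a, q2 + int (L * m + s) * b))"
      using shift_N_rational[where K = N] by simp
  qed
qed

end

lemma SE_ray_N_rational:
  assumes "admissible_frontier x" "ultimately_periodic_frontier x" "frontier_embedding x P"
    "SL2_tiling t" "extends_frontier t P" "0 \<le> a" "b \<le> 0" "(a, b) \<noteq> (0, 0)"
  shows "N_rational (\<lambda>n. t (q1 + int n * a, q2 + int n * b))"
proof -
  obtain p n0 n0' where "1 \<le> p" "\<forall>n\<ge>n0. x n = x (n + p)" "\<forall>n\<le>n0'. x n = x (n - p)"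
    using assms(2) unfolding ultimately_periodic_frontier_def by auto
  then interpret periodic_tiled_frontier x P t p n0 n0'
    using assms(1,3-5) by unfold_locales
  show ?thesis using ray_SE assms(6-8) by blast
qed

section \<open>Transposition and the main result\<close>

fun swap_letter :: "letter \<Rightarrow> letter" where
  "swap_letter X = Y"
| "swap_letter Y = X"

lemma transpose_frontier:
  assumes "admissible_frontier x" "ultimately_periodic_frontier x" "frontier_embedding x P"
    "SL2_tiling t" "extends_frontier t P"
  shows "admissible_frontier (swap_letter \<circ> x)" "ultimately_periodic_frontier (swap_letter \<circ> x)"
    "frontier_embedding (swap_letter \<circ> x) (prod.swap \<circ> P)" "SL2_tiling (t \<circ> prod.swap)"
    "extends_frontier (t \<circ> prod.swap) (prod.swap \<circ> P)"
proof -
  have swap_eq: "swap_letter l = c \<longleftrightarrow> l = swap_letter c" for l c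
    by (cases l; cases c) simp_all
  show "admissible_frontier (swap_letter \<circ> x)"
    using assms(1) unfolding admissible_frontier_def comp_def swap_eq by blast
  show "ultimately_periodic_frontier (swap_letter \<circ> x)"
    using assms(2) unfolding ultimately_periodic_frontier_def comp_def by metis
  show "frontier_embedding (swap_letter \<circ> x) (prod.swap \<circ> P)"
    unfolding frontier_embedding_def
  proof
    fix i
    have "P i = (if x i = X then (fst (P (i - 1)) + 1, snd (P (i - 1)))
                 else (fst (P (i - 1)), snd (P (i - 1)) + 1))"
      using assms(3) unfolding frontier_embedding_def by blast
    then show "(prod.swap \<circ> P) i = (if (swap_letter \<circ> x) i = X
        then (fst ((prod.swap \<circ> P) (i - 1)) + 1, snd ((prod.swap \<circ> P) (i - 1)))
        else (fst ((prod.swap \<circ> P) (i - 1)), snd ((prod.swap \<circ> P) (i - 1)) + 1))"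
      by (cases "x i") auto
  qed
  show "SL2_tiling (t \<circ> prod.swap)"
    using assms(4) unfolding SL2_tiling_def by (auto simp: algebra_simps)
  show "extends_frontier (t \<circ> prod.swap) (prod.swap \<circ> P)"
    using assms(5) unfolding extends_frontier_def by simp
qed

theorem corollary1:
  fixes x :: "int \<Rightarrow> letter" and P :: "int \<Rightarrow> int \<times> int" and t :: "int \<times> int \<Rightarrow> nat"
  assumes "admissible_frontier x"
    and "ultimately_periodic_frontier x"
    and "frontier_embedding x P"
    and "SL2_tiling t"
    and "extends_frontier t P"
  shows "\<forall>(Q::int \<times> int) (a::int) (b::int). (a, b) \<noteq> (0, 0) \<and> a * b \<le> 0 \<longrightarrow>
           N_rational (\<lambda>n. t (fst Q + int n * a, snd Q + int n * b))"
proof (intro allI impI)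
  fix Q :: "int \<times> int" and a b :: int
  assume ab: "(a, b) \<noteq> (0, 0) \<and> a * b \<le> 0"
  then consider (south_east) "0 \<le> a" "b \<le> 0" | (north_west) "0 \<le> b" "a \<le> 0"
    by (auto simp: mult_le_0_iff)
  then show "N_rational (\<lambda>n. t (fst Q + int n * a, snd Q + int n * b))"
  proof cases
    case south_east
    then show ?thesis using SE_ray_N_rational[OF assms] ab by blast
  next
    case north_west
    have "N_rational (\<lambda>n. (t \<circ> prod.swap) (snd Q + int n * b, fst Q + int n * a))"
      using SE_ray_N_rational[OF transpose_frontier[OF assms]] north_west ab by blast
    then show ?thesis by simp
  qed
qed

end
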